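(* Let $(V,\operatorname{val}_V)$ be a valued vector space of finite dimension $r$ over a valued field $(k,\nu)$ with value group $\mathbb{Z}$, such that $\nu\colon k\setminus\{0\}\to\mathbb{Z}$ is surjective, and fix $x\in k$ with $\nu(x)=1$. Suppose there exists a discriminant function $\operatorname{Disc}\colon\mathbb{B}_V\to\mathbb{Z}$ (with respect to this $x$). Consider the following procedure, applied to a $k$-basis $B_1,\dots,B_r$ of $V$: for $d=1,\dots,r$ in turn, first replace $B_d$ by $x^{-\operatorname{val}_V(B_d)}B_d$; then, as long as there exist $\alpha_1,\dots,\alpha_{d-1}\in k$ with $\operatorname{val}_V(\alpha_1B_1+\cdots+\alpha_{d-1}B_{d-1}+B_d)>0$, choose such $\alpha_1,\dots,\alpha_{d-1}$ and replace $B_d$ by $x^{-1}(\alpha_1B_1+\cdots+\alpha_{d-1}B_{d-1}+B_d)$. Finally return $B_1,\dots,B_r$. Then this procedure terminates.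
   Context: A valuation $\nu$ on $k$ and a value function $\operatorname{val}_V$ on $V$ are as usual: $\nu(a)=\infty\iff a=0$, $\nu(ab)=\nu(a)+\nu(b)$, $\nu(a+b)\ge\min(\nu(a),\nu(b))$; $\operatorname{val}_V(v)=\infty\iff v=0$, $\operatorname{val}_V(av)=\nu(a)+\operatorname{val}_V(v)$, $\operatorname{val}_V(v+w)\ge\min(\operatorname{val}_V(v),\operatorname{val}_V(w))$. An element $v$ is integral if $\operatorname{val}_V(v)\ge0$. $\mathbb{B}_V$ denotes the set of all (ordered) $k$-bases of $V$. A map $\operatorname{Disc}\colon\mathbb{B}_V\to\mathbb{Z}$ is a discriminant function on $V$ if for every basis $B_1,\dots,B_r$ of $V$: (i) $\gamma:=\operatorname{Disc}(\{B_1,\dots,B_r\})\ge0$ whenever all $B_i$ are integral; (ii) whenever there are $d\le r$ and $\alpha_1,\dots,\alpha_{d-1}\in k$ such that $\tilde B_d:=\alpha_1B_1+\cdots+\alpha_{d-1}B_{d-1}+B_d$ satisfies $\operatorname{val}_V(\tilde B_d)>\min_{i=1}^d\operatorname{val}_V(B_i)$, then $\operatorname{Disc}(\{B_1,\dots,B_{d-1},x^{-1}\tilde B_d,B_{d+1},\dots,B_r\})<\gamma$. *)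

theory Defs
  imports Complex_Main
begin

text \<open>A discrete valuation on k, with values in int on nonzero elements
  (the value at 0 is conventionally infinity and is never used).\<close>
definition valuation :: "('k::field \<Rightarrow> int) \<Rightarrow> bool" where
  "valuation \<nu> \<longleftrightarrow>
     (\<forall>a b. a \<noteq> 0 \<longrightarrow> b \<noteq> 0 \<longrightarrow> \<nu> (a * b) = \<nu> a + \<nu> b) \<and>
     (\<forall>a b. a \<noteq> 0 \<longrightarrow> b \<noteq> 0 \<longrightarrow> a + b \<noteq> 0 \<longrightarrow> \<nu> (a + b) \<ge> min (\<nu> a) (\<nu> b))"

text \<open>A value function on V (values on nonzero vectors; val 0 = infinity).\<close>
definition value_function ::
  "('k::field \<Rightarrow> 'v::ab_group_add \<Rightarrow> 'v) \<Rightarrow> ('k \<Rightarrow> int) \<Rightarrow> ('v \<Rightarrow> int) \<Rightarrow> bool" where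
  "value_function scale \<nu> valV \<longleftrightarrow>
     (\<forall>a v. a \<noteq> 0 \<longrightarrow> v \<noteq> 0 \<longrightarrow> valV (scale a v) = \<nu> a + valV v) \<and>
     (\<forall>v w. v \<noteq> 0 \<longrightarrow> w \<noteq> 0 \<longrightarrow> v + w \<noteq> 0 \<longrightarrow> valV (v + w) \<ge> min (valV v) (valV w))"

definition ordered_basis :: "('k::field \<Rightarrow> 'v::ab_group_add \<Rightarrow> 'v) \<Rightarrow> nat \<Rightarrow> 'v list \<Rightarrow> bool" where
  "ordered_basis scale r B \<longleftrightarrow> length B = r \<and> distinct B \<and>
     \<not> module.dependent scale (set B) \<and> module.span scale (set B) = UNIV"

text \<open>The vector alpha_1 B_1 + ... + alpha_{d-1} B_{d-1} + B_d (d is 1-based, lists 0-based).\<close>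
definition comb :: "('k::field \<Rightarrow> 'v::ab_group_add \<Rightarrow> 'v) \<Rightarrow> 'v list \<Rightarrow> nat \<Rightarrow> (nat \<Rightarrow> 'k) \<Rightarrow> 'v" where
  "comb scale B d \<alpha> = (\<Sum>i<d - 1. scale (\<alpha> i) (B ! i)) + B ! (d - 1)"

definition discriminant_function ::
  "('k::field \<Rightarrow> 'v::ab_group_add \<Rightarrow> 'v) \<Rightarrow> ('v \<Rightarrow> int) \<Rightarrow> nat \<Rightarrow> 'k \<Rightarrow> ('v list \<Rightarrow> int) \<Rightarrow> bool" where
  "discriminant_function scale valV r x Disc \<longleftrightarrow>
     (\<forall>B. ordered_basis scale r B \<longrightarrow> (\<forall>i<r. valV (B ! i) \<ge> 0) \<longrightarrow> Disc B \<ge> 0) \<and>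
     (\<forall>B d \<alpha>. ordered_basis scale r B \<longrightarrow> 1 \<le> d \<longrightarrow> d \<le> r \<longrightarrow>
        (comb scale B d \<alpha> = 0 \<or> valV (comb scale B d \<alpha>) > Min ((\<lambda>i. valV (B ! i)) ` {..<d})) \<longrightarrow>
        Disc (B[d - 1 := scale (inverse x) (comb scale B d \<alpha>)]) < Disc B)"

text \<open>"val_V(w) > 0" with the convention val_V(0) = infinity.\<close>
definition improvable :: "('k::field \<Rightarrow> 'v::ab_group_add \<Rightarrow> 'v) \<Rightarrow> ('v \<Rightarrow> int) \<Rightarrow> 'v list \<Rightarrow> nat \<Rightarrow> (nat \<Rightarrow> 'k) \<Rightarrow> bool" where
  "improvable scale valV B d \<alpha> \<longleftrightarrow> comb scale B d \<alpha> = 0 \<or> valV (comb scale B d \<alpha>) > 0"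

text \<open>A state (d, B) with d \<ge> 1 means:
  currently in the inner loop for (1-based) index d; state (0, B) is the start. States with no successor are final.\<close>
definition proc_step :: "('k::field \<Rightarrow> 'v::ab_group_add \<Rightarrow> 'v) \<Rightarrow> ('v \<Rightarrow> int) \<Rightarrow> nat \<Rightarrow> 'k \<Rightarrow>
    nat \<times> 'v list \<Rightarrow> nat \<times> 'v list \<Rightarrow> bool" where
  "proc_step scale valV r x s s' \<longleftrightarrow> (case s of (d, B) \<Rightarrow>
     (1 \<le> d \<and> (\<exists>\<alpha>. improvable scale valV B d \<alpha> \<and>
                    s' = (d, B[d - 1 := scale (inverse x) (comb scale B d \<alpha>)]))) \<or>
     (d < r \<and> (d = 0 \<or> \<not> (\<exists>\<alpha>. improvable scale valV B d \<alpha>)) \<and>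
        s' = (d + 1, B[d := scale (x powi (- valV (B ! d))) (B ! d)])))"

end

theory Submission
  imports Defs
begin

(* Along every run B stays a basis, B_1, ..., B_d stay integral and val(B_1) = 0.
   Measure a state by the pair (r - d, Disc B'), where B' is B with B_(d+1), ..., B_r
   rescaled to value 0: B' is an integral basis, so Disc B' >= 0 by (i). Moving on to
   d + 1 lowers r - d; a replacement inside the inner loop lowers Disc B' by (ii), because
   the minimum in (ii) is at most val(B_1) = 0 < val(alpha_1 B_1 + ... + B_d). The
   lexicographic order on pairs of naturals is well-founded. *)

context vector_space begin

lemma ordered_basis_nth_nonzero:
  assumes "ordered_basis scale r B" and "i < r"
  shows "B ! i \<noteq> 0"
  using assms unfolding ordered_basis_def by (metis dependent_zero nth_mem)

lemma ordered_basis_list_update: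
  assumes B: "ordered_basis scale r B" and i: "i < r" and c: "c \<noteq> 0"
    and w: "w - scale c (B ! i) \<in> span (set B - {B ! i})"
  shows "ordered_basis scale r (B[i := w])"
proof -
  define S where "S = set B - {B ! i}"
  have len: "length B = r" and dist: "distinct B"
    and indep_B: "independent (set B)" and span_B: "span (set B) = UNIV"
    using B unfolding ordered_basis_def by auto
  have set_B: "set B = insert (B ! i) S"
    using i len unfolding S_def by auto
  have "independent (insert (B ! i) S)"
    using indep_B set_B by simp
  then have indep_S: "independent S" and Bi_notin: "B ! i \<notin> span S"
    unfolding independent_insert S_def by auto
  have w_in: "w \<in> span (insert (B ! i) S)"
    using w unfolding span_breakdown_eq S_def by blast
  have w_notin: "w \<notin> span S"
  proof
    assume "w \<in> span S"
    then have "scale c (B ! i) \<in> span S"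
      using span_diff[OF _ w] unfolding S_def by fastforce
    then have "scale (inverse c) (scale c (B ! i)) \<in> span S"
      by (rule span_scale)
    with c Bi_notin show False by simp
  qed
  have "B ! i \<in> span (insert w S)"
    using in_span_insert[OF w_in w_notin] .
  then have "span (insert w S) = span (set B)"
    unfolding set_B span_eq using w_in by (auto intro: span_base)
  moreover have "set (B[i := w]) = insert w S"
    using set_update_distinct[OF dist] i len unfolding S_def by simp
  moreover have "distinct (B[i := w])"
    using distinct_list_update[OF dist] w_notin span_base unfolding S_def by blast
  ultimately show ?thesis
    using independent_insertI[OF w_notin indep_S] len span_B
    unfolding ordered_basis_def by simp
qed

lemma ordered_basis_scale_nth:
  assumes "ordered_basis scale r B" and "i < r" and "c \<noteq> 0"
  shows "ordered_basis scale r (B[i := scale c (B ! i)])"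
  using ordered_basis_list_update[OF assms] span_zero by simp

lemma comb_diff_in_span:
  assumes B: "ordered_basis scale r B" and d: "1 \<le> d" "d \<le> r"
  shows "comb scale B d \<alpha> - B ! (d - 1) \<in> span (set B - {B ! (d - 1)})"
proof -
  have "B ! j \<in> set B - {B ! (d - 1)}" if "j < d - 1" for j
    using B d that unfolding ordered_basis_def by (auto simp: nth_eq_iff_index_eq)
  then have "(\<Sum>j<d - 1. scale (\<alpha> j) (B ! j)) \<in> span (set B - {B ! (d - 1)})"
    by (intro span_sum span_scale span_base) simp
  then show ?thesis
    by (simp add: comb_def)
qed

lemma comb_nonzero:
  assumes B: "ordered_basis scale r B" and d: "1 \<le> d" "d \<le> r"
  shows "comb scale B d \<alpha> \<noteq> 0"
proof
  assume "comb scale B d \<alpha> = 0"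
  moreover have "- (comb scale B d \<alpha> - B ! (d - 1)) \<in> span (set B - {B ! (d - 1)})"
    using span_neg[OF comb_diff_in_span[OF assms]] .
  ultimately have "B ! (d - 1) \<in> span (set B - {B ! (d - 1)})"
    by simp
  moreover have "independent (insert (B ! (d - 1)) (set B - {B ! (d - 1)}))"
    using B d unfolding ordered_basis_def by (simp add: insert_absorb)
  ultimately show False
    unfolding independent_insert by simp
qed

lemma ordered_basis_update_comb:
  assumes B: "ordered_basis scale r B" and d: "1 \<le> d" "d \<le> r" and c: "c \<noteq> 0"
  shows "ordered_basis scale r (B[d - 1 := scale c (comb scale B d \<alpha>)])"
proof (rule ordered_basis_list_update[OF B _ c])
  show "scale c (comb scale B d \<alpha>) - scale c (B ! (d - 1)) \<in> span (set B - {B ! (d - 1)})"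
    using span_scale[OF comb_diff_in_span[OF assms(1-3)]] by (simp add: scale_right_diff_distrib)
qed (use d in simp)

end

lemma valuation_one:
  assumes "valuation \<nu>"
  shows "\<nu> (1::'k::field) = 0"
  using assms unfolding valuation_def by (metis add_cancel_left_left mult_1 one_neq_zero)

lemma valuation_inverse:
  assumes "valuation \<nu>" and "(a::'k::field) \<noteq> 0"
  shows "\<nu> (inverse a) = - \<nu> a"
  using assms valuation_one[OF assms(1)] unfolding valuation_def
  by (metis add_eq_0_iff inverse_nonzero_iff_nonzero right_inverse)

lemma valuation_power:
  assumes "valuation \<nu>" and "(a::'k::field) \<noteq> 0"
  shows "\<nu> (a ^ n) = int n * \<nu> a"
proof (induction n)
  case 0
  then show ?case using valuation_one[OF assms(1)] by simp
next
  case (Suc n)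
  then show ?case using assms unfolding valuation_def by (simp add: algebra_simps)
qed

lemma valuation_power_int:
  assumes "valuation \<nu>" and "(a::'k::field) \<noteq> 0"
  shows "\<nu> (a powi n) = n * \<nu> a"
  using assms valuation_power[OF assms(1)] valuation_inverse[OF assms]
  by (cases "n \<ge> 0") (simp_all add: power_int_def)

locale discriminant_reduction = vector_space scale
  for scale :: "'k::field \<Rightarrow> 'v::ab_group_add \<Rightarrow> 'v" +
  fixes \<nu> :: "'k \<Rightarrow> int" and valV :: "'v \<Rightarrow> int" and x :: 'k
    and r :: nat and Disc :: "'v list \<Rightarrow> int"
  assumes valuation: "valuation \<nu>"
    and x_nonzero: "x \<noteq> 0" and valuation_x: "\<nu> x = 1"
    and value_function: "value_function scale \<nu> valV"
    and discriminant: "discriminant_function scale valV r x Disc"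
begin

lemma valV_scale: "a \<noteq> 0 \<Longrightarrow> v \<noteq> 0 \<Longrightarrow> valV (scale a v) = \<nu> a + valV v"
  using value_function unfolding value_function_def by blast

lemma Disc_nonneg:
  "ordered_basis scale r B \<Longrightarrow> (\<And>i. i < r \<Longrightarrow> 0 \<le> valV (B ! i)) \<Longrightarrow> 0 \<le> Disc B"
  using discriminant unfolding discriminant_function_def by blast

lemma Disc_decreases:
  assumes "ordered_basis scale r B" and "1 \<le> d" and "d \<le> r"
    and "Min ((\<lambda>i. valV (B ! i)) ` {..<d}) < valV (comb scale B d \<alpha>)"
  shows "Disc (B[d - 1 := scale (inverse x) (comb scale B d \<alpha>)]) < Disc B"
  using discriminant assms unfolding discriminant_function_def by blast

definition normalize :: "'v \<Rightarrow> 'v" where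
  "normalize v = scale (x powi (- valV v)) v"

lemma valV_normalize: "v \<noteq> 0 \<Longrightarrow> valV (normalize v) = 0"
  unfolding normalize_def
  using valV_scale valuation_power_int[OF valuation x_nonzero] valuation_x x_nonzero by simp

lemma ordered_basis_normalize_nth:
  "ordered_basis scale r B \<Longrightarrow> i < r \<Longrightarrow> ordered_basis scale r (B[i := normalize (B ! i)])"
  unfolding normalize_def using ordered_basis_scale_nth x_nonzero by simp

definition normalize_from :: "nat \<Rightarrow> 'v list \<Rightarrow> 'v list" where
  "normalize_from d B = take d B @ map normalize (drop d B)"

lemma length_normalize_from [simp]: "length (normalize_from d B) = length B"
  by (simp add: normalize_from_def)

lemma nth_normalize_from:
  "i < length B \<Longrightarrow> normalize_from d B ! i = (if i < d then B ! i else normalize (B ! i))"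
  by (simp add: normalize_from_def nth_append)

lemma normalize_from_length [simp]: "normalize_from (length B) B = B"
  by (simp add: normalize_from_def)

lemma normalize_from_Suc:
  "d < length B \<Longrightarrow> normalize_from d B = (normalize_from (Suc d) B)[d := normalize (B ! d)]"
  by (rule nth_equalityI) (auto simp: nth_normalize_from nth_list_update)

lemma ordered_basis_normalize_from:
  assumes B: "ordered_basis scale r B" and d: "d \<le> r"
  shows "ordered_basis scale r (normalize_from d B)"
proof -
  have len: "length B = r"
    using B unfolding ordered_basis_def by simp
  from d show ?thesis
  proof (induction rule: inc_induct)
    case base
    then show ?case using B len [symmetric] by simp
  next
    case (step d)
    then show ?case
      using ordered_basis_normalize_nth[of "normalize_from (Suc d) B" d] len
      by (simp add: normalize_from_Suc nth_normalize_from)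
  qed
qed

lemma comb_normalize_from:
  "1 \<le> d \<Longrightarrow> d \<le> length B \<Longrightarrow> comb scale (normalize_from d B) d \<alpha> = comb scale B d \<alpha>"
  unfolding comb_def by (auto simp: nth_normalize_from intro!: sum.cong)

lemma normalize_from_list_update:
  "1 \<le> d \<Longrightarrow> d \<le> length B \<Longrightarrow> normalize_from d (B[d - 1 := w]) = (normalize_from d B)[d - 1 := w]"
  by (rule nth_equalityI) (auto simp: nth_normalize_from nth_list_update)

fun state_invariant :: "nat \<times> 'v list \<Rightarrow> bool" where
  "state_invariant (d, B) \<longleftrightarrow> ordered_basis scale r B \<and> d \<le> r \<and>
     (1 \<le> d \<longrightarrow> valV (B ! 0) = 0) \<and> (\<forall>i<d. 0 \<le> valV (B ! i))"

lemma Disc_normalize_from_nonneg: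
  assumes "state_invariant (d, B)"
  shows "0 \<le> Disc (normalize_from d B)"
proof (rule Disc_nonneg)
  have B: "ordered_basis scale r B" and "d \<le> r" and integral: "\<forall>i<d. 0 \<le> valV (B ! i)"
    using assms by auto
  show "ordered_basis scale r (normalize_from d B)"
    using B \<open>d \<le> r\<close> by (rule ordered_basis_normalize_from)
  have len: "length B = r"
    using B unfolding ordered_basis_def by simp
  show "0 \<le> valV (normalize_from d B ! i)" if "i < r" for i
    using that integral valV_normalize ordered_basis_nth_nonzero[OF B that] len
    by (simp add: nth_normalize_from)
qed

lemma improvable_valV_comb_pos:
  assumes "ordered_basis scale r B" and "1 \<le> d" and "d \<le> r"
    and "improvable scale valV B d \<alpha>"
  shows "0 < valV (comb scale B d \<alpha>)"
  using assms comb_nonzero unfolding improvable_def by blast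

lemma inner_step_invariant:
  assumes inv: "state_invariant (d, B)" and d: "1 \<le> d"
    and imp: "improvable scale valV B d \<alpha>"
  shows "state_invariant (d, B[d - 1 := scale (inverse x) (comb scale B d \<alpha>)])"
proof -
  let ?c = "comb scale B d \<alpha>"
  have B: "ordered_basis scale r B" and "d \<le> r" and B0: "valV (B ! 0) = 0"
    and integral: "\<forall>i<d. 0 \<le> valV (B ! i)"
    using inv d by auto
  have c_pos: "0 < valV ?c"
    using improvable_valV_comb_pos[OF B d \<open>d \<le> r\<close> imp] .
  have "d \<noteq> 1"
    using c_pos B0 unfolding comb_def by auto
  have "valV (scale (inverse x) ?c) = valV ?c - 1"
    using valV_scale comb_nonzero[OF B d \<open>d \<le> r\<close>] x_nonzero
      valuation_inverse[OF valuation x_nonzero] valuation_x by simp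
  then show ?thesis
    using ordered_basis_update_comb[OF B d \<open>d \<le> r\<close>] x_nonzero \<open>d \<noteq> 1\<close> d \<open>d \<le> r\<close>
      c_pos B0 integral B
    by (auto simp: nth_list_update ordered_basis_def)
qed

lemma inner_step_Disc_decreases:
  assumes inv: "state_invariant (d, B)" and d: "1 \<le> d"
    and imp: "improvable scale valV B d \<alpha>"
  shows "Disc (normalize_from d (B[d - 1 := scale (inverse x) (comb scale B d \<alpha>)]))
    < Disc (normalize_from d B)"
proof -
  let ?C = "normalize_from d B"
  have B: "ordered_basis scale r B" and "d \<le> r" and B0: "valV (B ! 0) = 0"
    using inv d by auto
  have len: "length B = r"
    using B unfolding ordered_basis_def by simp
  have comb_C: "comb scale ?C d \<alpha> = comb scale B d \<alpha>"
    using comb_normalize_from d \<open>d \<le> r\<close> len by simp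
  have "Min ((\<lambda>i. valV (?C ! i)) ` {..<d}) \<le> valV (?C ! 0)"
    using d by (intro Min_le) auto
  also have "\<dots> = 0"
    using B0 d \<open>d \<le> r\<close> len by (simp add: nth_normalize_from)
  also have "\<dots> < valV (comb scale ?C d \<alpha>)"
    using improvable_valV_comb_pos[OF B d \<open>d \<le> r\<close> imp] comb_C by simp
  finally have "Disc (?C[d - 1 := scale (inverse x) (comb scale ?C d \<alpha>)]) < Disc ?C"
    using Disc_decreases ordered_basis_normalize_from[OF B \<open>d \<le> r\<close>] d \<open>d \<le> r\<close> by blast
  then show ?thesis
    using normalize_from_list_update d \<open>d \<le> r\<close> len comb_C by simp
qed

lemma outer_step_invariant:
  assumes inv: "state_invariant (d, B)" and d: "d < r"
  shows "state_invariant (Suc d, B[d := normalize (B ! d)])"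
proof -
  have B: "ordered_basis scale r B"
    using inv by simp
  have len: "length B = r"
    using B unfolding ordered_basis_def by simp
  have "valV (normalize (B ! d)) = 0"
    using valV_normalize ordered_basis_nth_nonzero[OF B d] .
  then show ?thesis
    using inv ordered_basis_normalize_nth[OF B d] d len
    by (auto simp: nth_list_update less_Suc_eq)
qed

fun potential :: "nat \<times> 'v list \<Rightarrow> nat \<times> nat" where
  "potential (d, B) = (r - d, nat (Disc (normalize_from d B)))"

lemma proc_step_decreases_potential:
  assumes inv: "state_invariant s" and step: "proc_step scale valV r x s s'"
  shows "state_invariant s' \<and> (potential s', potential s) \<in> less_than <*lex*> less_than"
proof -
  obtain d B where s: "s = (d, B)"
    by fastforce
  from step consider
      (inner) \<alpha> where "1 \<le> d" "improvable scale valV B d \<alpha>"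
        "s' = (d, B[d - 1 := scale (inverse x) (comb scale B d \<alpha>)])"
    | (outer) "d < r" "s' = (Suc d, B[d := normalize (B ! d)])"
    unfolding proc_step_def normalize_def s by auto
  then show ?thesis
  proof cases
    case inner
    let ?B' = "B[d - 1 := scale (inverse x) (comb scale B d \<alpha>)]"
    have inv': "state_invariant (d, ?B')"
      using inner_step_invariant inv inner unfolding s by blast
    have "0 \<le> Disc (normalize_from d ?B')"
      using Disc_normalize_from_nonneg[OF inv'] .
    moreover have "Disc (normalize_from d ?B') < Disc (normalize_from d B)"
      using inner_step_Disc_decreases inv inner unfolding s by blast
    ultimately show ?thesis
      using inv' inner(3) unfolding s by simp
  next
    case outer
    have "state_invariant s'"
      using outer_step_invariant inv outer unfolding s by blast
    then show ?thesis
      using outer unfolding s by (simp add: diff_less_mono2)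
  qed
qed

theorem no_infinite_run:
  assumes "state_invariant s\<^sub>0"
  shows "\<not> (\<exists>s. s 0 = s\<^sub>0 \<and> (\<forall>n. proc_step scale valV r x (s n) (s (Suc n))))"
proof
  assume "\<exists>s. s 0 = s\<^sub>0 \<and> (\<forall>n. proc_step scale valV r x (s n) (s (Suc n)))"
  then obtain s where s0: "s 0 = s\<^sub>0" and run: "\<And>n. proc_step scale valV r x (s n) (s (Suc n))"
    by blast
  have inv: "state_invariant (s n)" for n
  proof (induction n)
    case 0
    then show ?case using assms s0 by simp
  next
    case (Suc n)
    then show ?case using proc_step_decreases_potential run by blast
  qed
  have "(potential (s (Suc n)), potential (s n)) \<in> less_than <*lex*> less_than" for n
    using proc_step_decreases_potential[OF inv run] by blast
  then show False
    using wf_no_infinite_down_chainE[of "less_than <*lex*> less_than" "potential \<circ> s"] by auto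
qed

end

theorem mainTheorem4:
  fixes scale :: "'k::field \<Rightarrow> 'v::ab_group_add \<Rightarrow> 'v"
    and \<nu> :: "'k \<Rightarrow> int" and valV :: "'v \<Rightarrow> int"
    and x :: 'k and r :: nat and Disc :: "'v list \<Rightarrow> int" and B :: "'v list"
  assumes "vector_space scale"
    and "\<exists>S. finite S \<and> module.span scale S = UNIV"
    and "vector_space.dim scale (UNIV :: 'v set) = r"
    and "valuation \<nu>"
    and "\<forall>n. \<exists>a. a \<noteq> 0 \<and> \<nu> a = n"
    and "x \<noteq> 0" and "\<nu> x = 1"
    and "value_function scale \<nu> valV"
    and "discriminant_function scale valV r x Disc"
    and "ordered_basis scale r B"
  shows "\<not> (\<exists>s. s 0 = (0, B) \<and> (\<forall>n. proc_step scale valV r x (s n) (s (Suc n))))"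
proof -
  interpret discriminant_reduction scale \<nu> valV x r Disc
    using assms unfolding discriminant_reduction_def discriminant_reduction_axioms_def by blast
  have "state_invariant (0, B)"
    using assms(10) by simp
  then show ?thesis
    by (rule no_infinite_run)
qed

end
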